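(* In the setting of the soft-label KNN classification utility, assume $N\ge\max(2,K)$ and let $H:=\sum_{j=1}^{K-1}\frac1{j+1}$ (so $H=0$ if $K=1$). Then for every $1\le i\le N$, the Shapley value $\phi_i$ satisfies $$-\frac{H}{N}-\Big(\frac{1}{\max(i,K)}-\frac1N\Big)-\frac{1}{CN}\;\le\;\phi_i\;\le\;\frac{H}{N}+\frac{1}{\max(i,K)}-\frac{1}{CN}.$$
   Context: Training data $(x_i,y_i)$, $i\in\mathcal I=\{1,\dots,N\}$, with $x_i\in\mathbb R^d$ and labels in a set of $C\ge1$ classes; test point $(x_{\mathrm{test}},y_{\mathrm{test}})$; $K\ge 1$ an integer. Indices are sorted so that $\|x_1-x_{\mathrm{test}}\|\le\dots\le\|x_N-x_{\mathrm{test}}\|$ (Euclidean norm, ties broken by index). For nonempty $S\subseteq\mathcal I$, $\pi^{(S)}(j)$ is the $j$-th smallest index in $S$. The utility is $v(\emptyset)=\frac1C$ and, for $S\ne\emptyset$, $v(S)=\frac{1}{\min(K,|S|)}\sum_{j=1}^{\min(K,|S|)}\mathbb 1[y_{\pi^{(S)}(j)}=y_{\mathrm{test}}]$. The Shapley value of $i$ is $\phi_i=\frac1N\sum_{k=1}^{N}\binom{N-1}{k-1}^{-1}\sum_{S\subseteq\mathcal I\setminus\{i\},\,|S|=k-1}\big[v(S\cup\{i\})-v(S)\big]$. *)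

theory Defs
  imports "HOL-Analysis.Analysis"
begin

(* pi^(S)(j) = j-th smallest element of S (1-based j); here 0-based via list index *)
definition kth_smallest :: "nat set \<Rightarrow> nat \<Rightarrow> nat" where
  "kth_smallest S j = sorted_list_of_set S ! (j - 1)"

(* soft-label KNN utility; C = number of classes *)
definition knn_utility :: "nat \<Rightarrow> nat \<Rightarrow> (nat \<Rightarrow> 'c) \<Rightarrow> 'c \<Rightarrow> nat set \<Rightarrow> real" where
  "knn_utility C K y ytest S =
     (if S = {} then 1 / real C
      else (1 / real (min K (card S))) *
           (\<Sum>j = 1..min K (card S). if y (kth_smallest S j) = ytest then 1 else 0))"

definition shapley :: "nat \<Rightarrow> (nat set \<Rightarrow> real) \<Rightarrow> nat \<Rightarrow> real" where
  "shapley N v i =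
     (1 / real N) * (\<Sum>k = 1..N. (1 / real ((N - 1) choose (k - 1))) *
        (\<Sum>S \<in> {S. S \<subseteq> {1..N} - {i} \<and> card S = k - 1}. v (S \<union> {i}) - v S))"

end

theory Submission
  imports Defs
begin

text \<open>Write \<open>w(n, s) = s! (n-1-s)! / n!\<close>. The Shapley value of \<open>i\<close> is the \<open>w\<close>-weighted sum,
over coalitions \<open>S \<subseteq> {1..N} - {i}\<close>, of the marginal contributions \<open>v (S \<union> {i}) - v S\<close>.
For nonempty \<open>S\<close> the KNN utility is the mean label indicator over the \<open>K\<close> smallest indices.
If \<open>|S| < K\<close>, adding \<open>i\<close> turns a mean of \<open>|S|\<close> numbers in \<open>[0, 1]\<close> into a mean of \<open>|S| + 1\<close>
of them, which moves it by at most \<open>1/(|S| + 1)\<close>; if \<open>|S| \<ge> K\<close>, the neighbourhood changes only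
when fewer than \<open>K\<close> members of \<open>S\<close> lie below \<open>i\<close>, and then \<open>i\<close> replaces a single neighbour,
so the change is at most \<open>1/K\<close>. Integrating the first bound against the weights gives
\<open>(1 + H)/N\<close>. For the second, the weights marginalise over the players above \<open>i\<close> to the weights
of the game on \<open>{1..i}\<close>, so the coalitions with fewer than \<open>K\<close> members below \<open>i\<close> have total
weight \<open>min(K, i)/i\<close>, while those of size below \<open>K\<close> have weight \<open>K/N\<close>; this yields
\<open>1/max(i, K) - 1/N\<close>. The empty coalition contributes \<open>(v {i} - 1/C)/N\<close> with
\<open>v {i} \<in> {0, 1}\<close>, which accounts for the remaining terms.\<close>

definition smallest :: "nat \<Rightarrow> 'a::linorder set \<Rightarrow> 'a set" where
  "smallest K S = set (take K (sorted_list_of_set S))"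

lemma card_less_sorted_list_of_set_nth:
  assumes "finite S" "j < card S"
  shows "card {z\<in>S. z < sorted_list_of_set S ! j} = j"
proof -
  let ?xs = "sorted_list_of_set S"
  have sorted: "sorted_wrt (<) ?xs" by simp
  have len: "length ?xs = card S" by simp
  have "{z\<in>S. z < ?xs ! j} = set (take j ?xs)"
  proof (intro set_eqI iffI)
    fix z assume "z \<in> {z\<in>S. z < ?xs ! j}"
    then have "z \<in> set ?xs" and less: "z < ?xs ! j" using assms by auto
    then obtain l where l: "l < length ?xs" "?xs ! l = z" by (auto simp: in_set_conv_nth)
    have "l < j"
    proof (rule ccontr)
      assume "\<not> l < j"
      then have "j \<le> l" by simp
      then have "?xs ! j \<le> ?xs ! l"
        using sorted l assms len
        by (metis le_eq_less_or_eq sorted_wrt_nth_less order.strict_implies_order order.refl)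
      then show False using less l by simp
    qed
    then show "z \<in> set (take j ?xs)" using l by (auto simp: in_set_conv_nth)
  next
    fix z assume "z \<in> set (take j ?xs)"
    then obtain l where l: "l < j" "?xs ! l = z" using assms len by (auto simp: in_set_conv_nth)
    then have "z < ?xs ! j" using sorted assms len by (metis sorted_wrt_nth_less)
    moreover have "z \<in> S" using l assms len
      by (metis dual_order.strict_trans nth_mem set_sorted_list_of_set)
    ultimately show "z \<in> {z\<in>S. z < ?xs ! j}" by simp
  qed
  then show ?thesis using assms by (simp add: distinct_card)
qed

lemma mem_smallest_iff:
  assumes "finite S"
  shows "x \<in> smallest K S \<longleftrightarrow> x \<in> S \<and> card {z\<in>S. z < x} < K"
proof -
  let ?xs = "sorted_list_of_set S"
  have "x \<in> smallest K S \<longleftrightarrow> (\<exists>j. j < card S \<and> j < K \<and> ?xs ! j = x)"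
    using assms unfolding smallest_def by (auto simp: in_set_conv_nth)
  also have "\<dots> \<longleftrightarrow> x \<in> S \<and> card {z\<in>S. z < x} < K"
  proof
    assume "\<exists>j. j < card S \<and> j < K \<and> ?xs ! j = x"
    then obtain j where "j < card S" "j < K" "?xs ! j = x" by blast
    then show "x \<in> S \<and> card {z\<in>S. z < x} < K"
      using card_less_sorted_list_of_set_nth[OF assms] assms
      by (metis length_sorted_list_of_set nth_mem set_sorted_list_of_set)
  next
    assume x: "x \<in> S \<and> card {z\<in>S. z < x} < K"
    then obtain j where "j < length ?xs" "?xs ! j = x" using assms
      by (metis in_set_conv_nth set_sorted_list_of_set)
    then show "\<exists>j. j < card S \<and> j < K \<and> ?xs ! j = x"
      using card_less_sorted_list_of_set_nth[OF assms, of j] x by auto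
  qed
  finally show ?thesis .
qed

lemma card_smallest: "finite S \<Longrightarrow> card (smallest K S) = min K (card S)"
  unfolding smallest_def by (simp add: distinct_card)

lemma smallest_subset: "finite S \<Longrightarrow> smallest K S \<subseteq> S"
  using mem_smallest_iff by blast

lemma smallest_eq_self: "finite S \<Longrightarrow> card S \<le> K \<Longrightarrow> smallest K S = S"
  by (metis card_smallest card_subset_eq min.absorb2 smallest_subset)

lemma smallest_insert_diff:
  assumes "finite S"
  shows "smallest K (insert i S) - smallest K S \<subseteq> (if card {z\<in>S. z < i} < K then {i} else {})"
proof
  fix x assume x: "x \<in> smallest K (insert i S) - smallest K S"
  then have x_in: "x \<in> insert i S" and x_rank: "card {z\<in>insert i S. z < x} < K"
    using assms by (simp_all add: mem_smallest_iff)
  have "x = i"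
  proof (rule ccontr)
    assume "x \<noteq> i"
    moreover have "card {z\<in>S. z < x} \<le> card {z\<in>insert i S. z < x}"
      using assms by (intro card_mono) auto
    ultimately have "x \<in> smallest K S" using x_in x_rank assms by (simp add: mem_smallest_iff)
    then show False using x by simp
  qed
  moreover have "{z\<in>insert i S. z < i} = {z\<in>S. z < i}" by auto
  ultimately show "x \<in> (if card {z\<in>S. z < i} < K then {i} else {})" using x_rank by simp
qed

lemma knn_utility_eq_mean_smallest:
  assumes "finite S" "S \<noteq> {}"
  shows "knn_utility C K y ytest S =
     (\<Sum>x\<in>smallest K S. if y x = ytest then 1 else 0) / real (card (smallest K S))"
proof -
  let ?xs = "sorted_list_of_set S"
  let ?m = "min K (card S)"
  let ?a = "\<lambda>x. if y x = ytest then 1 else 0 :: real"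
  have "(\<Sum>j = 1..?m. ?a (kth_smallest S j)) = (\<Sum>j<?m. ?a (?xs ! j))"
    unfolding kth_smallest_def by (simp add: sum.atLeast1_atMost_eq)
  also have "\<dots> = sum_list (map ?a (take ?m ?xs))"
    by (simp add: sum_list_sum_nth min_def atLeast0LessThan)
  also have "\<dots> = (\<Sum>x\<in>smallest K S. ?a x)"
    unfolding smallest_def by (simp add: sum_list_distinct_conv_sum_set min_def take_all)
  finally show ?thesis
    using assms unfolding knn_utility_def by (simp add: card_smallest)
qed

lemma abs_mean_insert_diff_le:
  fixes a A s :: real
  assumes "0 \<le> a" "a \<le> 1" "0 \<le> A" "A \<le> s" "0 < s"
  shows "\<bar>(a + A) / (s + 1) - A / s\<bar> \<le> 1 / (s + 1)"
proof -
  have "(a + A) / (s + 1) - A / s = (s * a - A) / (s * (s + 1))"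
    using assms by (simp add: field_simps)
  moreover have "\<bar>s * a - A\<bar> \<le> s"
  proof -
    have "0 \<le> s * a" "s * a \<le> s" using assms by (simp_all add: mult_left_le)
    then show ?thesis using assms by linarith
  qed
  ultimately show ?thesis
    using assms by (simp add: abs_divide divide_le_eq)
qed

lemma abs_sum_diff_le_card_Diff:
  fixes a :: "'a \<Rightarrow> real"
  assumes "finite T" "finite T'" "card T = card T'" "\<And>x. 0 \<le> a x" "\<And>x. a x \<le> 1"
  shows "\<bar>sum a T' - sum a T\<bar> \<le> card (T' - T)"
proof -
  have bounds: "0 \<le> sum a D" "sum a D \<le> card D" for D
    using assms(4,5) sum_bounded_above[of D a 1] by (auto intro: sum_nonneg)
  have "card (T - T') = card (T' - T)"
    using assms(1-3) by (simp add: card_Diff_subset_Int Int_commute)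
  moreover have "sum a T' - sum a T = sum a (T' - T) - sum a (T - T')"
    using sum.Int_Diff[OF assms(1), of a T'] sum.Int_Diff[OF assms(2), of a T]
    by (simp add: Int_commute)
  ultimately show ?thesis using bounds[of "T' - T"] bounds[of "T - T'"] by linarith
qed

definition knn_marginal_bound :: "nat \<Rightarrow> nat \<Rightarrow> nat set \<Rightarrow> real" where
  "knn_marginal_bound K i S =
     (if card S < K then 1 / real (card S + 1) else if card {z\<in>S. z < i} < K then 1 / K else 0)"

lemma knn_utility_marginal_bound:
  assumes "finite S" "S \<noteq> {}" "i \<notin> S" "K \<ge> 1"
  shows "\<bar>knn_utility C K y ytest (S \<union> {i}) - knn_utility C K y ytest S\<bar>
    \<le> knn_marginal_bound K i S"
proof -
  define a where "a x = (if y x = ytest then 1 else 0 :: real)" for x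
  have a: "0 \<le> a x" "a x \<le> 1" for x by (simp_all add: a_def)
  have v: "knn_utility C K y ytest T = sum a (smallest K T) / card (smallest K T)"
    if "finite T" "T \<noteq> {}" for T
    using knn_utility_eq_mean_smallest[OF that] by (simp add: a_def)
  have S_i: "S \<union> {i} = insert i S" by simp
  show ?thesis
  proof (cases "card S < K")
    case True
    then have "smallest K S = S" "smallest K (insert i S) = insert i S"
      using assms by (simp_all add: smallest_eq_self)
    then have "knn_utility C K y ytest (S \<union> {i}) - knn_utility C K y ytest S
        = (a i + sum a S) / (card S + 1) - sum a S / card S"
      using assms by (simp add: S_i v)
    moreover have "0 \<le> sum a S" "sum a S \<le> card S"
      using a sum_bounded_above[of S a 1] by (auto intro: sum_nonneg)
    ultimately show ?thesis
      using True a[of i] assms abs_mean_insert_diff_le[of "a i" "sum a S" "card S"]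
      by (simp add: knn_marginal_bound_def card_gt_0_iff add.commute)
  next
    case False
    let ?T = "smallest K S" and ?T' = "smallest K (insert i S)"
    have card_T: "card ?T = K" "card ?T' = K"
      using False assms by (simp_all add: card_smallest)
    have fin: "finite ?T" "finite ?T'"
      using assms smallest_subset finite_subset by (metis finite_insert)+
    have "\<bar>sum a ?T' - sum a ?T\<bar> \<le> card (?T' - ?T)"
      using abs_sum_diff_le_card_Diff[OF fin _ a] card_T by simp
    also have "\<dots> \<le> (if card {z\<in>S. z < i} < K then 1 else 0)"
      using card_mono[OF _ smallest_insert_diff[OF assms(1), of K i]] by (cases "card {z\<in>S. z < i} < K") auto
    finally have "\<bar>sum a ?T' - sum a ?T\<bar> / K \<le> (if card {z\<in>S. z < i} < K then 1 else 0) / K"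
      by (simp add: divide_right_mono)
    then show ?thesis
      using False assms
      by (simp add: knn_marginal_bound_def S_i v card_T diff_divide_distrib[symmetric] abs_divide
          split: if_splits)
  qed
qed

text \<open>\<open>shapley_weight n s\<close> is the probability that, in a uniformly random ordering of \<open>n\<close> players,
the predecessors of a fixed player form a given set of size \<open>s\<close>.\<close>

definition shapley_weight :: "nat \<Rightarrow> nat \<Rightarrow> real" where
  "shapley_weight n s = fact s * fact (n - 1 - s) / fact n"

lemma shapley_weight_nonneg: "0 \<le> shapley_weight n s"
  unfolding shapley_weight_def by simp

lemma binomial_mult_shapley_weight:
  assumes "s < n"
  shows "real ((n - 1) choose s) * shapley_weight n s = 1 / real n"
proof -
  have "fact s * fact (n - 1 - s) * real ((n - 1) choose s) = fact (n - 1)"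
    using binomial_fact_lemma[of s "n - 1"] assms
    by (metis of_nat_fact of_nat_mult less_Suc_eq_le Suc_pred' gr_zeroI not_less0)
  moreover have "(fact n :: real) = real n * fact (n - 1)"
    using assms by (metis fact_reduce gr_zeroI not_less0 of_nat_fact)
  ultimately show ?thesis
    unfolding shapley_weight_def by (simp add: field_simps)
qed

lemma shapley_weight_Suc:
  assumes "s < n"
  shows "shapley_weight n s = shapley_weight (Suc n) s + shapley_weight (Suc n) (Suc s)"
proof -
  obtain d where n: "n = Suc (s + d)" using assms by (metis less_imp_Suc_add)
  define F where "F = (fact (s + d) :: real)"
  have F: "F > 0" unfolding F_def by simp
  have "shapley_weight n s = fact s * fact d / ((s + d + 1) * F)"
    unfolding shapley_weight_def n F_def by (simp add: algebra_simps)
  also have "\<dots> = fact s * ((d + 1) * fact d) / ((s + d + 2) * ((s + d + 1) * F))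
      + (s + 1) * fact s * fact d / ((s + d + 2) * ((s + d + 1) * F))"
    using F by (simp add: divide_simps) (simp add: algebra_simps)
  also have "\<dots> = shapley_weight (Suc n) s + shapley_weight (Suc n) (Suc s)"
    unfolding shapley_weight_def n F_def by (simp add: algebra_simps)
  finally show ?thesis .
qed

lemma sum_Pow_insert:
  assumes "finite A" "b \<notin> A"
  shows "(\<Sum>S\<in>Pow (insert b A). h S) = (\<Sum>S\<in>Pow A. h S + h (insert b S))"
proof -
  have "(\<Sum>S\<in>Pow (insert b A). h S) = (\<Sum>S\<in>Pow A. h S) + (\<Sum>S\<in>insert b ` Pow A. h S)"
    unfolding Pow_insert by (rule sum.union_disjoint) (use assms in auto)
  also have "(\<Sum>S\<in>insert b ` Pow A. h S) = (\<Sum>S\<in>Pow A. h (insert b S))"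
    by (subst sum.reindex) (use assms in \<open>auto intro!: inj_onI simp: o_def\<close>)
  finally show ?thesis by (simp add: sum.distrib)
qed

lemma sum_Pow_by_card:
  assumes "finite U"
  shows "(\<Sum>S\<in>Pow U. h S) = (\<Sum>t\<le>card U. \<Sum>S\<in>{S. S \<subseteq> U \<and> card S = t}. h S)"
proof -
  have "(\<Sum>S\<in>Pow U. h S) = (\<Sum>t\<le>card U. \<Sum>S\<in>{S\<in>Pow U. card S = t}. h S)"
    by (rule sum.group[symmetric]) (use assms in \<open>auto intro: card_mono\<close>)
  then show ?thesis by simp
qed

lemma sum_Pow_shapley_weight_card:
  assumes "finite U" "Suc (card U) = n"
  shows "(\<Sum>S\<in>Pow U. shapley_weight n (card S) * f (card S)) = (\<Sum>t<n. f t) / n"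
proof -
  have layer: "(\<Sum>S\<in>{S. S \<subseteq> U \<and> card S = t}. shapley_weight n (card S) * f (card S))
      = real (card U choose t) * shapley_weight n t * f t" for t
  proof -
    have "(\<Sum>S\<in>{S. S \<subseteq> U \<and> card S = t}. shapley_weight n (card S) * f (card S))
        = (\<Sum>S\<in>{S. S \<subseteq> U \<and> card S = t}. shapley_weight n t * f t)"
      by (rule sum.cong) auto
    then show ?thesis by (simp add: n_subsets[OF assms(1)])
  qed
  have "(\<Sum>S\<in>Pow U. shapley_weight n (card S) * f (card S))
      = (\<Sum>t\<le>card U. real (card U choose t) * shapley_weight n t * f t)"
    by (simp only: sum_Pow_by_card[OF assms(1)] layer)
  also have "\<dots> = (\<Sum>t<n. f t / n)"
    using assms(2) binomial_mult_shapley_weight[of _ n] by (intro sum.cong) auto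
  finally show ?thesis by (simp add: sum_divide_distrib)
qed

lemma sum_Pow_shapley_weight_Int:
  assumes "finite A" "finite B" "A \<inter> B = {}"
  shows "(\<Sum>S\<in>Pow (A \<union> B). shapley_weight (card A + card B + 1) (card S) * f (S \<inter> A))
       = (\<Sum>T\<in>Pow A. shapley_weight (card A + 1) (card T) * f T)"
  using assms(2,3)
proof (induction B rule: finite_induct)
  case empty
  show ?case by (intro sum.cong) (auto simp: Int_absorb2)
next
  case (insert b B)
  let ?n = "card A + card B + 1"
  have b: "b \<notin> A \<union> B" and fin: "finite (A \<union> B)" using insert assms(1) by auto
  have "A \<union> insert b B = insert b (A \<union> B)" by auto
  then have "(\<Sum>S\<in>Pow (A \<union> insert b B). shapley_weight (card A + card (insert b B) + 1) (card S) * f (S \<inter> A))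
      = (\<Sum>S\<in>Pow (A \<union> B). shapley_weight (Suc ?n) (card S) * f (S \<inter> A)
          + shapley_weight (Suc ?n) (card (insert b S)) * f (insert b S \<inter> A))"
    using insert.hyps by (simp add: sum_Pow_insert[OF fin b])
  also have "\<dots> = (\<Sum>S\<in>Pow (A \<union> B).
      (shapley_weight (Suc ?n) (card S) + shapley_weight (Suc ?n) (Suc (card S))) * f (S \<inter> A))"
  proof (intro sum.cong refl)
    fix S assume "S \<in> Pow (A \<union> B)"
    then have "finite S" "b \<notin> S" "insert b S \<inter> A = S \<inter> A"
      using b finite_subset[OF _ fin] by blast+
    then show "shapley_weight (Suc ?n) (card S) * f (S \<inter> A)
          + shapley_weight (Suc ?n) (card (insert b S)) * f (insert b S \<inter> A)
        = (shapley_weight (Suc ?n) (card S) + shapley_weight (Suc ?n) (Suc (card S))) * f (S \<inter> A)"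
      by (simp add: distrib_right)
  qed
  also have "\<dots> = (\<Sum>S\<in>Pow (A \<union> B). shapley_weight ?n (card S) * f (S \<inter> A))"
  proof (intro sum.cong refl)
    fix S assume "S \<in> Pow (A \<union> B)"
    then have "card S \<le> card (A \<union> B)" using card_mono[OF fin] by simp
    then have "card S < ?n" using card_Un_le[of A B] by linarith
    show "(shapley_weight (Suc ?n) (card S) + shapley_weight (Suc ?n) (Suc (card S))) * f (S \<inter> A)
        = shapley_weight ?n (card S) * f (S \<inter> A)"
      using shapley_weight_Suc[OF \<open>card S < ?n\<close>] by simp
  qed
  also have "\<dots> = (\<Sum>T\<in>Pow A. shapley_weight (card A + 1) (card T) * f T)"
    using insert.prems by (intro insert.IH) auto
  finally show ?case .
qed

lemma shapley_eq_sum_Pow: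
  assumes "i \<in> {1..N}"
  shows "shapley N v i = (\<Sum>S\<in>Pow ({1..N} - {i}). shapley_weight N (card S) * (v (S \<union> {i}) - v S))"
proof -
  let ?U = "{1..N} - {i}"
  let ?D = "\<lambda>S. v (S \<union> {i}) - v S"
  have card_U: "Suc (card ?U) = N" using assms by simp
  have weight: "1 / real N * (1 / real ((N - 1) choose (k - 1))) = shapley_weight N (k - 1)"
    if "k \<in> {1..N}" for k
  proof -
    have "k - 1 < N" "(N - 1) choose (k - 1) > 0" using that by auto
    then show ?thesis using binomial_mult_shapley_weight[of "k - 1" N] by (simp add: divide_simps ac_simps)
  qed
  have "shapley N v i = (\<Sum>k = 1..N. \<Sum>S\<in>{S. S \<subseteq> ?U \<and> card S = k - 1}. shapley_weight N (k - 1) * ?D S)"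
    unfolding shapley_def sum_distrib_left
    by (intro sum.cong refl) (simp only: mult.assoc[symmetric] weight sum_distrib_left)
  also have "\<dots> = (\<Sum>t<N. \<Sum>S\<in>{S. S \<subseteq> ?U \<and> card S = t}. shapley_weight N t * ?D S)"
    by (simp add: sum.atLeast1_atMost_eq)
  also have "\<dots> = (\<Sum>t\<le>card ?U. \<Sum>S\<in>{S. S \<subseteq> ?U \<and> card S = t}. shapley_weight N (card S) * ?D S)"
    using card_U by (intro sum.cong) auto
  also have "\<dots> = (\<Sum>S\<in>Pow ?U. shapley_weight N (card S) * ?D S)"
    by (simp add: sum_Pow_by_card)
  finally show ?thesis .
qed

lemma sum_Pow_shapley_weight_card_less:
  assumes "finite U" "Suc (card U) = n"
  shows "(\<Sum>S\<in>Pow U. shapley_weight n (card S) * (if card S < K then 1 else 0)) = real (min K n) / real n"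
proof -
  have "(\<Sum>t<n. if t < K then 1 else 0 :: real) = card ({..<n} \<inter> {t. t < K})"
    by (simp add: sum.If_cases)
  also have "{..<n} \<inter> {t. t < K} = {..<min K n}" by auto
  finally show ?thesis
    using sum_Pow_shapley_weight_card[OF assms, of "\<lambda>t. if t < K then 1 else 0"] by simp
qed

lemma sum_Pow_shapley_weight_rank_less:
  fixes i N K :: nat
  assumes "i \<in> {1..N}"
  shows "(\<Sum>S\<in>Pow ({1..N} - {i}). shapley_weight N (card S) * (if card {z\<in>S. z < i} < K then 1 else 0))
       = real (min K i) / real i"
proof -
  define A B where "A = {1..<i}" and "B = {i<..N}"
  have U: "{1..N} - {i} = A \<union> B" and disj: "A \<inter> B = {}" and fin: "finite A" "finite B"
    using assms by (auto simp: A_def B_def)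
  have card: "card A + card B + 1 = N" "Suc (card A) = i"
    using assms by (simp_all add: A_def B_def)
  have "{z\<in>S. z < i} = S \<inter> A" if "S \<in> Pow (A \<union> B)" for S
    using that by (auto simp: A_def B_def)
  then have "(\<Sum>S\<in>Pow ({1..N} - {i}). shapley_weight N (card S) * (if card {z\<in>S. z < i} < K then 1 else 0))
      = (\<Sum>S\<in>Pow (A \<union> B). shapley_weight (card A + card B + 1) (card S) * (if card (S \<inter> A) < K then 1 else 0))"
    unfolding U card(1) by (intro sum.cong) auto
  also have "\<dots> = (\<Sum>T\<in>Pow A. shapley_weight (Suc (card A)) (card T) * (if card T < K then 1 else 0))"
    using sum_Pow_shapley_weight_Int[OF fin disj] by simp
  also have "\<dots> = real (min K i) / real i"
    using sum_Pow_shapley_weight_card_less[OF fin(1) card(2)] card(2) by simp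
  finally show ?thesis .
qed

lemma knn_marginal_bound_eq:
  assumes "finite S" "1 \<le> K"
  shows "knn_marginal_bound K i S = (if card S < K then 1 / real (card S + 1) else 0)
     + ((if card {z\<in>S. z < i} < K then 1 else 0) - (if card S < K then 1 else 0)) / K"
proof -
  have "card {z\<in>S. z < i} \<le> card S" using assms by (intro card_mono) auto
  then show ?thesis unfolding knn_marginal_bound_def by auto
qed

lemma sum_Pow_shapley_weight_knn_marginal_bound:
  assumes "i \<in> {1..N}" "1 \<le> K" "K \<le> N"
  shows "(\<Sum>S\<in>Pow ({1..N} - {i}). shapley_weight N (card S) * knn_marginal_bound K i S)
       = (\<Sum>t<K. 1 / real (t + 1)) / N + (1 / real (max i K) - 1 / N)"
proof -
  let ?U = "{1..N} - {i}" and ?w = "\<lambda>S. shapley_weight N (card S)"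
  have U: "finite ?U" "Suc (card ?U) = N" using assms by auto
  have "{..<N} \<inter> {t. t < K} = {..<K}" using assms(3) by auto
  then have "(\<Sum>t<N. if t < K then 1 / real (t + 1) else 0) = (\<Sum>t<K. 1 / real (t + 1))"
    by (simp add: sum.If_cases)
  then have small: "(\<Sum>S\<in>Pow ?U. ?w S * (if card S < K then 1 / real (card S + 1) else 0))
      = (\<Sum>t<K. 1 / real (t + 1)) / N"
    using sum_Pow_shapley_weight_card[OF U, of "\<lambda>t. if t < K then 1 / real (t + 1) else 0"] by simp
  have "?w S * knn_marginal_bound K i S = ?w S * (if card S < K then 1 / real (card S + 1) else 0)
      + (?w S * (if card {z\<in>S. z < i} < K then 1 else 0) - ?w S * (if card S < K then 1 else 0)) / K"
    if "S \<in> Pow ?U" for S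
    using that finite_subset[OF _ U(1)] assms(2)
    by (simp add: knn_marginal_bound_eq ring_distribs diff_divide_distrib)
  then have "(\<Sum>S\<in>Pow ?U. ?w S * knn_marginal_bound K i S)
      = (\<Sum>S\<in>Pow ?U. ?w S * (if card S < K then 1 / real (card S + 1) else 0))
        + ((\<Sum>S\<in>Pow ?U. ?w S * (if card {z\<in>S. z < i} < K then 1 else 0))
           - (\<Sum>S\<in>Pow ?U. ?w S * (if card S < K then 1 else 0))) / K"
    by (simp add: sum.distrib sum_subtractf flip: sum_divide_distrib)
  also have "\<dots> = (\<Sum>t<K. 1 / real (t + 1)) / N + (real (min K i) / i - K / N) / K"
    unfolding small sum_Pow_shapley_weight_rank_less[OF assms(1)] sum_Pow_shapley_weight_card_less[OF U]
    using assms(3) by (simp add: min_absorb1)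
  also have "(real (min K i) / i - K / N) / K = 1 / real (max i K) - 1 / N"
    using assms by (auto simp: min_def max_def field_simps)
  finally show ?thesis .
qed

lemma knn_utility_singleton: "1 \<le> K \<Longrightarrow> knn_utility C K y ytest {i} = (if y i = ytest then 1 else 0)"
  by (simp add: knn_utility_def kth_smallest_def)

lemma abs_sum_Pow_nonempty_knn_marginals_le:
  assumes "i \<in> {1..N}" "1 \<le> K" "K \<le> N"
  shows "\<bar>\<Sum>S\<in>Pow ({1..N} - {i}) - {{}}.
            shapley_weight N (card S) * (knn_utility C K y ytest (S \<union> {i}) - knn_utility C K y ytest S)\<bar>
     \<le> (\<Sum>t<K. 1 / real (t + 1)) / N - 1 / N + (1 / real (max i K) - 1 / N)"
proof -
  let ?U = "{1..N} - {i}" and ?w = "\<lambda>S. shapley_weight N (card S)"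
  let ?D = "\<lambda>S. knn_utility C K y ytest (S \<union> {i}) - knn_utility C K y ytest S"
  have "\<bar>?w S * ?D S\<bar> \<le> ?w S * knn_marginal_bound K i S" if "S \<in> Pow ?U - {{}}" for S
  proof -
    have "finite S" "S \<noteq> {}" "i \<notin> S" using that finite_subset[of S ?U] by auto
    then have "\<bar>?D S\<bar> \<le> knn_marginal_bound K i S"
      using assms(2) by (rule knn_utility_marginal_bound)
    then show ?thesis by (simp add: abs_mult mult_left_mono shapley_weight_nonneg)
  qed
  then have "\<bar>\<Sum>S\<in>Pow ?U - {{}}. ?w S * ?D S\<bar> \<le> (\<Sum>S\<in>Pow ?U - {{}}. ?w S * knn_marginal_bound K i S)"
    by (intro order_trans[OF sum_abs sum_mono])
  also have "\<dots> = (\<Sum>S\<in>Pow ?U. ?w S * knn_marginal_bound K i S) - ?w {} * knn_marginal_bound K i {}"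
    by (simp add: sum_diff1)
  also have "(\<Sum>S\<in>Pow ?U. ?w S * knn_marginal_bound K i S)
      = (\<Sum>t<K. 1 / real (t + 1)) / N + (1 / real (max i K) - 1 / N)"
    by (rule sum_Pow_shapley_weight_knn_marginal_bound[OF assms])
  also have "?w {} * knn_marginal_bound K i {} = 1 / N"
    using assms binomial_mult_shapley_weight[of 0 N] by (simp add: knn_marginal_bound_def)
  finally show ?thesis by simp
qed

theorem mainTheorem5:
  fixes N K C :: nat
    and x :: "nat \<Rightarrow> 'a::euclidean_space" and xtest :: "'a"
    and y :: "nat \<Rightarrow> 'c" and ytest :: 'c
    and L :: "'c set"
    and i :: nat
  assumes "finite L" and "card L = C" and "C \<ge> 1"
    and "\<And>j. j \<in> {1..N} \<Longrightarrow> y j \<in> L" and "ytest \<in> L"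
    and "K \<ge> 1"
    and "N \<ge> max 2 K"
    and sorted: "\<And>j l. 1 \<le> j \<Longrightarrow> j \<le> l \<Longrightarrow> l \<le> N \<Longrightarrow>
                   norm (x j - xtest) \<le> norm (x l - xtest)"
    and "1 \<le> i" and "i \<le> N"
  shows "let H = (\<Sum>j = 1..K - 1. 1 / real (j + 1));
             \<phi> = shapley N (knn_utility C K y ytest) i
         in - H / real N - (1 / real (max i K) - 1 / real N) - 1 / (real C * real N) \<le> \<phi>
            \<and> \<phi> \<le> H / real N + 1 / real (max i K) - 1 / (real C * real N)"
proof -
  define H where "H = (\<Sum>j = 1..K - 1. 1 / real (j + 1))"
  let ?v = "knn_utility C K y ytest" and ?U = "{1..N} - {i}"
  let ?tail = "\<Sum>S\<in>Pow ?U - {{}}. shapley_weight N (card S) * (?v (S \<union> {i}) - ?v S)"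
  have i: "i \<in> {1..N}" and K: "1 \<le> K" "K \<le> N" using assms by auto
  have "shapley N ?v i = shapley_weight N 0 * (?v {i} - ?v {}) + ?tail"
    unfolding shapley_eq_sum_Pow[OF i]
    using sum.remove[of "Pow ?U" "{}" "\<lambda>S. shapley_weight N (card S) * (?v (S \<union> {i}) - ?v S)"]
    by simp
  also have "shapley_weight N 0 = 1 / N"
    using i binomial_mult_shapley_weight[of 0 N] by simp
  also have "?v {} = 1 / C" by (simp add: knn_utility_def)
  finally have phi: "shapley N ?v i = (?v {i} - 1 / C) / N + ?tail" by simp
  have "(\<Sum>t<K. 1 / real (t + 1)) = 1 + H"
    using K(1) by (cases K)
      (simp_all add: H_def sum.lessThan_Suc_shift sum.atLeast1_atMost_eq del: sum.lessThan_Suc)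
  then have tail: "\<bar>?tail\<bar> \<le> H / N + (1 / real (max i K) - 1 / N)"
    using abs_sum_Pow_nonempty_knn_marginals_le[OF i K] by (simp add: add_divide_distrib)
  have "0 \<le> ?v {i}" "?v {i} \<le> 1" using K(1) by (simp_all add: knn_utility_singleton)
  then have "- 1 / (C * N) \<le> (?v {i} - 1 / C) / N" "(?v {i} - 1 / C) / N \<le> 1 / N - 1 / (C * N)"
    using \<open>C \<ge> 1\<close> K by (simp_all add: divide_simps)
  then show ?thesis
    unfolding Let_def H_def[symmetric] phi using tail by (simp add: abs_le_iff)
qed

end
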